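(* Let $N\ge2$. The following rules define an action of the braid-cyclic group $BC_N$ on the set of all trees with $N$ edges labelled bijectively by $0,1,\dots,N-1$ (considered up to label-preserving isomorphism): (1) the generator $u_k$ ($1\le k\le N-1$) affects only the edges labelled $k-1$ and $k$: (a) if these two edges have no common vertex, they exchange their labels (the tree is unchanged); (b) if the edge labelled $k-1$ joins vertices $A$ and $B$ and the edge labelled $k$ joins $A$ and $C$, then the edge $AB$ receives label $k$, the edge $AC$ is erased, and a new edge $BC$ is drawn and labelled $k-1$; (2) the generator $\lambda$ does not change the tree but shifts the edge labels cyclically, $i\mapsto i+1 \pmod N$.
   Context: The braid-cyclic group $BC_N$ is the subgroup of $\mathrm{Aut}(F(s_0,\dots,s_{N-1}))$ ($F$ the free group on $s_0,\dots,s_{N-1}$) generated by $\lambda$ and $u_1,\dots,u_{N-1}$, where $\lambda(s_k)=s_{k+1}$ (indices mod $N$), $u_k(s_{k-1})=s_k$, $u_k(s_k)=s_k^{-1}s_{k-1}s_k$, and $u_k(s_l)=s_l$ for $l\ne k-1,k$. *)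

theory Defs
  imports "HOL-Algebra.Bij"
begin

text \<open>A letter (i, True) is s_i, a letter (i, False) is s_i^{-1}.\<close>
type_synonym word = "(nat \<times> bool) list"

fun red :: "word \<Rightarrow> word" where
  "red [] = []"
| "red (x # xs) = (case red xs of
      [] \<Rightarrow> [x]
    | y # ys \<Rightarrow> (if fst x = fst y \<and> snd x \<noteq> snd y then ys else x # y # ys))"

definition winv :: "word \<Rightarrow> word" where
  "winv w = rev (map (\<lambda>(i, b). (i, \<not> b)) w)"

text \<open>An endomorphism of the free group is represented by the (reduced) images of the
  generators; generators s_i with i >= N are never used and are kept fixed.\<close>
type_synonym endo = "nat \<Rightarrow> word"

definition subst :: "endo \<Rightarrow> word \<Rightarrow> word" where
  "subst \<phi> w = concat (map (\<lambda>(i, b). if b then \<phi> i else winv (\<phi> i)) w)"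

definition comp_endo :: "endo \<Rightarrow> endo \<Rightarrow> endo" where
  "comp_endo \<phi> \<psi> = (\<lambda>i. red (subst \<phi> (\<psi> i)))"

definition id_endo :: endo where
  "id_endo = (\<lambda>i. [(i, True)])"

definition lam_aut :: "nat \<Rightarrow> endo" where
  "lam_aut N = (\<lambda>i. if i < N then [((i + 1) mod N, True)] else [(i, True)])"

definition lam_inv_aut :: "nat \<Rightarrow> endo" where
  "lam_inv_aut N = (\<lambda>i. if i < N then [((i + N - 1) mod N, True)] else [(i, True)])"

definition u_aut :: "nat \<Rightarrow> endo" where
  "u_aut k = (\<lambda>i. if i = k - 1 then [(k, True)]
                  else if i = k then [(k, False), (k - 1, True), (k, True)]
                  else [(i, True)])"

definition u_inv_aut :: "nat \<Rightarrow> endo" where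
  "u_inv_aut k = (\<lambda>i. if i = k then [(k - 1, True)]
                  else if i = k - 1 then [(k - 1, True), (k, True), (k - 1, False)]
                  else [(i, True)])"

definition BC_gens :: "nat \<Rightarrow> endo set" where
  "BC_gens N = {lam_aut N, lam_inv_aut N} \<union> (\<Union>k\<in>{1..N-1}. {u_aut k, u_inv_aut k})"

inductive_set BC_set :: "nat \<Rightarrow> endo set" for N where
  BC_id: "id_endo \<in> BC_set N"
| BC_step: "g \<in> BC_gens N \<Longrightarrow> x \<in> BC_set N \<Longrightarrow> comp_endo g x \<in> BC_set N"

definition BC :: "nat \<Rightarrow> endo monoid" where
  "BC N = \<lparr>carrier = BC_set N, mult = comp_endo, one = id_endo\<rparr>"

text \<open>A tree with N edges labelled 0..N-1, realised on vertex set {0..N}: edge i is e i.\<close>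
type_synonym ltree = "nat \<Rightarrow> nat set"

definition is_ltree :: "nat \<Rightarrow> ltree \<Rightarrow> bool" where
  "is_ltree N e \<longleftrightarrow>
     (\<forall>i<N. \<exists>a b. a \<le> N \<and> b \<le> N \<and> a \<noteq> b \<and> e i = {a, b}) \<and>
     (\<forall>i\<ge>N. e i = {}) \<and>
     (\<forall>v\<le>N. (0, v) \<in> {(a, b). \<exists>i<N. e i = {a, b}}\<^sup>*)"

definition tree_iso_rel :: "nat \<Rightarrow> (ltree \<times> ltree) set" where
  "tree_iso_rel N = {(e, e'). is_ltree N e \<and> is_ltree N e' \<and>
      (\<exists>\<pi>. bij_betw \<pi> {0..N} {0..N} \<and> (\<forall>i<N. e' i = \<pi> ` e i))}"

definition tree_classes :: "nat \<Rightarrow> ltree set set" where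
  "tree_classes N = {e. is_ltree N e} // tree_iso_rel N"

definition tree_class :: "nat \<Rightarrow> ltree \<Rightarrow> ltree set" where
  "tree_class N e = tree_iso_rel N `` {e}"

definition u_op :: "nat \<Rightarrow> ltree \<Rightarrow> ltree" where
  "u_op k e = (if e (k - 1) \<inter> e k = {}
     then e(k - 1 := e k, k := e (k - 1))
     else e(k - 1 := (e (k - 1) - e k) \<union> (e k - e (k - 1)), k := e (k - 1)))"

definition lam_op :: "nat \<Rightarrow> ltree \<Rightarrow> ltree" where
  "lam_op N e = (\<lambda>j. if j < N then e ((j + N - 1) mod N) else {})"

end

theory Submission
  imports Defs "HOL-Combinatorics.Permutations"
begin

text \<open>
  Read the edge \<open>{a, b}\<close> of a labelled tree as the transposition \<open>(a b)\<close> of its vertices.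
  Substituting for each generator \<open>s\<^sub>i\<close> the transposition of edge \<open>i\<close> evaluates every word
  of the free group to a permutation of the vertices. For the generators of \<open>BC\<^sub>N\<close>, and hence
  for all of \<open>BC\<^sub>N\<close>, the images of the \<open>s\<^sub>i\<close> evaluate again to transpositions, namely
  conjugates of edge transpositions, and their supports form a new labelled tree: \<open>\<lambda>\<^sup>-\<^sup>1\<close>
  shifts the labels, and \<open>u\<^sub>k\<^sup>-\<^sup>1\<close> gives label \<open>k\<close> to edge \<open>k - 1\<close> and label \<open>k - 1\<close>
  to the image of edge \<open>k\<close> under the transposition of edge \<open>k - 1\<close>. That is rule (1):
  disjoint edges just swap labels, while \<open>(A B)\<close> moves the edge \<open>AC\<close> to \<open>BC\<close>, which keeps
  the graph connected. Evaluation is compatible with substitution, so this is a right action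
  of \<open>BC\<^sub>N\<close> on labelled trees; it commutes with renaming the vertices and so descends to
  isomorphism classes, and taking inverses turns it into the required homomorphism.
\<close>

definition edge_transp :: "nat set \<Rightarrow> nat \<Rightarrow> nat" where
  "edge_transp S = (if card S = 2 then transpose (Min S) (Max S) else id)"

lemma edge_transp_doubleton [simp]: "a \<noteq> b \<Longrightarrow> edge_transp {a, b} = transpose a b"
  by (cases a b rule: linorder_cases) (auto simp: edge_transp_def transpose_commute)

lemma edge_transp_cases:
  obtains a b where "a \<noteq> b" "S = {a, b}" "edge_transp S = transpose a b"
  | "card S \<noteq> 2" "edge_transp S = id"
  by (metis card_2_iff edge_transp_def edge_transp_doubleton)

lemma edge_transp_empty [simp]: "edge_transp {} = id"
  by (simp add: edge_transp_def)

lemma edge_transp_involution [simp]: "edge_transp S (edge_transp S x) = x"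
  by (cases S rule: edge_transp_cases) auto

lemma edge_transp_comp_self [simp]: "edge_transp S \<circ> edge_transp S = id"
  by (simp add: fun_eq_iff)

lemma edge_transp_comp_self_left [simp]: "edge_transp S \<circ> (edge_transp S \<circ> f) = f"
  by (simp add: fun_eq_iff)

lemma bij_edge_transp [simp]: "bij (edge_transp S)"
  by (cases S rule: edge_transp_cases) auto

lemma inj_on_edge_transp [simp]: "inj_on (edge_transp S) A"
  using bij_is_inj[OF bij_edge_transp] subset_UNIV by (rule inj_on_subset)

lemma inv_edge_transp [simp]: "inv_into UNIV (edge_transp S) = edge_transp S"
  by (rule inv_unique_comp) simp_all

lemma bij_comp_inv_cancel [simp]:
  assumes "bij p"
  shows "p \<circ> inv_into UNIV p = id" and "p \<circ> (inv_into UNIV p \<circ> f) = f"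
    and "inv_into UNIV p \<circ> p = id" and "inv_into UNIV p \<circ> (p \<circ> f) = f"
  using assms by (auto simp: fun_eq_iff bij_is_inj bij_is_surj surj_f_inv_f)

lemma edge_transp_image:
  assumes "bij p"
  shows "edge_transp (p ` S) = p \<circ> edge_transp S \<circ> inv_into UNIV p"
proof (cases S rule: edge_transp_cases)
  case (1 a b)
  then have "p a \<noteq> p b"
    using assms by (metis bij_is_inj inj_eq)
  moreover have "transpose (p a) (p b) = p \<circ> transpose a b \<circ> inv_into UNIV p"
  proof
    fix x
    obtain y where x: "x = p y"
      using bij_is_surj[OF assms] by blast
    show "transpose (p a) (p b) x = (p \<circ> transpose a b \<circ> inv_into UNIV p) x"
      using transpose_apply_commute[OF assms, of "p a" "p b" y] assms
      by (simp add: x bij_is_inj inv_f_f)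
  qed
  ultimately show ?thesis
    using 1 by simp
next
  case 2
  then have "card (p ` S) \<noteq> 2"
    using assms by (metis bij_is_inj card_image inj_on_subset subset_UNIV)
  then have "edge_transp (p ` S) = id"
    by (simp add: edge_transp_def)
  also have "id = p \<circ> edge_transp S \<circ> inv_into UNIV p"
    using 2(2) bij_comp_inv_cancel(1)[OF assms] by (simp only: comp_id)
  finally show ?thesis .
qed

lemma edge_transp_conj:
  "edge_transp T \<circ> edge_transp S \<circ> edge_transp T = edge_transp (edge_transp T ` S)"
  using edge_transp_image[of "edge_transp T" S] by simp

lemma edge_transp_moves: "edge_transp S x = x \<or> {x, edge_transp S x} = S"
  by (cases S rule: edge_transp_cases) (auto simp: transpose_def)

lemma edge_transp_in: "S \<subseteq> A \<Longrightarrow> x \<in> A \<Longrightarrow> edge_transp S x \<in> A"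
  by (cases S rule: edge_transp_cases) (auto simp: transpose_def)

lemma card_2_obtain_other:
  assumes "card S = 2" and "x \<in> S"
  obtains y where "x \<noteq> y" "S = {x, y}"
proof -
  obtain a b where ab: "a \<noteq> b" "S = {a, b}"
    using card_2_iff[THEN iffD1, OF assms(1)] by blast
  show thesis
  proof (cases "x = a")
    case True
    then show thesis
      using that ab by blast
  next
    case False
    then have "x = b"
      using assms(2) ab by blast
    then show thesis
      using that[of a] ab by (simp add: insert_commute)
  qed
qed

lemma edge_transp_image_edge:
  assumes S: "card S = 2" and T: "card T = 2" and "S \<noteq> T"
  shows "edge_transp S ` T = (if S \<inter> T = {} then T else (S - T) \<union> (T - S))"
proof (cases "S \<inter> T = {}")
  case True
  have "edge_transp S t = t" if "t \<in> T" for t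
    using edge_transp_moves[of S t] True that by blast
  then have "edge_transp S ` T = (\<lambda>t. t) ` T"
    by (rule image_cong[OF refl])
  then show ?thesis
    using True by simp
next
  case False
  then obtain x where x: "x \<in> S" "x \<in> T"
    by blast
  obtain y where y: "x \<noteq> y" "S = {x, y}"
    using S x(1) by (rule card_2_obtain_other)
  obtain z where z: "x \<noteq> z" "T = {x, z}"
    using T x(2) by (rule card_2_obtain_other)
  have "y \<noteq> z"
    using y z \<open>S \<noteq> T\<close> by blast
  then show ?thesis
    using False x y z by auto
qed

definition supp :: "(nat \<Rightarrow> nat) \<Rightarrow> nat set" where
  "supp p = {x. p x \<noteq> x}"

lemma supp_id [simp]: "supp id = {}"
  by (simp add: supp_def)

lemma supp_edge_transp: "supp (edge_transp S) = (if card S = 2 then S else {})"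
  by (cases S rule: edge_transp_cases) (auto simp: supp_def transpose_def)

lemma edge_transp_supp [simp]: "edge_transp (supp (edge_transp S)) = edge_transp S"
  unfolding supp_edge_transp by (simp add: edge_transp_def)

lemma supp_conj: "bij p \<Longrightarrow> supp (p \<circ> q \<circ> inv_into UNIV p) = p ` supp q"
  by (auto simp: supp_def bij_inv_eq_iff image_iff) (metis bij_inv_eq_iff)+

section \<open>Evaluating words at the edge transpositions\<close>

text \<open>Letters of either sign are sent to the transposition of their edge, an involution; so this is
  the homomorphism from the free group that sends \<open>s\<^sub>i\<close> to the transposition of edge \<open>i\<close>.\<close>

fun eval_word :: "ltree \<Rightarrow> word \<Rightarrow> nat \<Rightarrow> nat" where
  "eval_word e [] = id"
| "eval_word e (x # xs) = edge_transp (e (fst x)) \<circ> eval_word e xs"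

lemma eval_word_append [simp]: "eval_word e (xs @ ys) = eval_word e xs \<circ> eval_word e ys"
  by (induction xs) (auto simp: comp_assoc)

lemma eval_word_red [simp]: "eval_word e (red w) = eval_word e w"
proof (induction w)
  case (Cons x xs)
  note IH = this
  show ?case
  proof (cases "red xs")
    case Nil
    then show ?thesis
      using IH by (simp add: fun_eq_iff)
  next
    case (Cons y ys)
    then have "eval_word e xs = edge_transp (e (fst y)) \<circ> eval_word e ys"
      using IH by (simp add: fun_eq_iff)
    then show ?thesis
      using Cons by auto
  qed
qed simp

lemma eval_word_winv_comp: "eval_word e (winv w) \<circ> eval_word e w = id"
proof (induction w)
  case (Cons x xs)
  then show ?case
    by (simp add: winv_def case_prod_beta comp_assoc)
qed (simp add: winv_def)

lemma eval_word_winv: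
  assumes "eval_word e w = edge_transp S"
  shows "eval_word e (winv w) = edge_transp S"
proof -
  have "eval_word e (winv w) = eval_word e (winv w) \<circ> (eval_word e w \<circ> eval_word e w)"
    using assms by simp
  also have "\<dots> = eval_word e w"
    by (simp add: eval_word_winv_comp flip: comp_assoc)
  finally show ?thesis
    using assms by simp
qed

lemma eval_word_image: "bij p \<Longrightarrow> eval_word (\<lambda>i. p ` e i) w = p \<circ> eval_word e w \<circ> inv_into UNIV p"
  by (induction w) (auto simp: edge_transp_image bij_is_surj surj_iff comp_assoc)

definition transp_valued :: "endo \<Rightarrow> ltree \<Rightarrow> bool" where
  "transp_valued \<alpha> e \<longleftrightarrow> (\<forall>i. \<exists>S. eval_word e (\<alpha> i) = edge_transp S)"

definition edge_act :: "endo \<Rightarrow> ltree \<Rightarrow> ltree" where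
  "edge_act \<alpha> e = (\<lambda>i. supp (eval_word e (\<alpha> i)))"

lemma edge_transp_edge_act:
  "transp_valued \<alpha> e \<Longrightarrow> edge_transp (edge_act \<alpha> e i) = eval_word e (\<alpha> i)"
  unfolding transp_valued_def edge_act_def by (metis edge_transp_supp)

lemma eval_word_subst:
  assumes "transp_valued \<alpha> e"
  shows "eval_word e (subst \<alpha> w) = eval_word (edge_act \<alpha> e) w"
proof (induction w)
  case (Cons x xs)
  obtain i b where x: "x = (i, b)"
    by force
  obtain S where S: "eval_word e (\<alpha> i) = edge_transp S"
    using assms unfolding transp_valued_def by blast
  have "eval_word e (if b then \<alpha> i else winv (\<alpha> i)) = edge_transp (edge_act \<alpha> e i)"
    using eval_word_winv[OF S] S edge_transp_edge_act[OF assms, of i] by (cases b) simp_all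
  moreover have "subst \<alpha> (x # xs) = (if b then \<alpha> i else winv (\<alpha> i)) @ subst \<alpha> xs"
    by (simp add: subst_def x)
  ultimately show ?case
    using Cons.IH x by simp
qed (simp add: subst_def)

lemma eval_word_comp_endo:
  "transp_valued \<alpha> e \<Longrightarrow> eval_word e (comp_endo \<alpha> \<beta> i) = eval_word (edge_act \<alpha> e) (\<beta> i)"
  by (simp add: comp_endo_def eval_word_subst)

lemma edge_act_comp_endo:
  "transp_valued \<alpha> e \<Longrightarrow> edge_act (comp_endo \<alpha> \<beta>) e = edge_act \<beta> (edge_act \<alpha> e)"
  by (simp add: edge_act_def eval_word_comp_endo)

lemma transp_valued_comp_endo:
  "transp_valued \<alpha> e \<Longrightarrow> transp_valued \<beta> (edge_act \<alpha> e) \<Longrightarrow> transp_valued (comp_endo \<alpha> \<beta>) e"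
  by (simp add: transp_valued_def eval_word_comp_endo)

lemma edge_act_image: "bij p \<Longrightarrow> edge_act \<alpha> (\<lambda>i. p ` e i) = (\<lambda>i. p ` edge_act \<alpha> e i)"
  by (simp add: edge_act_def eval_word_image supp_conj)

section \<open>Labelled trees\<close>

definition ltree_adj :: "nat \<Rightarrow> ltree \<Rightarrow> (nat \<times> nat) set" where
  "ltree_adj N e = {(a, b). {a, b} \<in> e ` {..<N}}"

lemma is_ltree_iff:
  "is_ltree N e \<longleftrightarrow>
     (\<forall>i<N. \<exists>a b. a \<le> N \<and> b \<le> N \<and> a \<noteq> b \<and> e i = {a, b}) \<and>
     (\<forall>i\<ge>N. e i = {}) \<and>
     (\<forall>v\<le>N. (0, v) \<in> (ltree_adj N e)\<^sup>*)"
proof -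
  have "{(a, b). \<exists>i<N. e i = {a, b}} = ltree_adj N e"
    by (auto simp: ltree_adj_def)
  then show ?thesis
    unfolding is_ltree_def by simp
qed

lemma ltree_edge:
  "is_ltree N e \<Longrightarrow> i < N \<Longrightarrow> \<exists>a b. a \<le> N \<and> b \<le> N \<and> a \<noteq> b \<and> e i = {a, b}"
  unfolding is_ltree_def by blast

lemma ltree_edge_beyond: "is_ltree N e \<Longrightarrow> N \<le> i \<Longrightarrow> e i = {}"
  unfolding is_ltree_def by blast

lemma ltree_edge_subset: "is_ltree N e \<Longrightarrow> e i \<subseteq> {0..N}"
  by (cases "i < N") (auto simp: ltree_edge_beyond dest!: ltree_edge)

lemma ltree_edge_card: "is_ltree N e \<Longrightarrow> i < N \<Longrightarrow> card (e i) = 2"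
  by (auto dest!: ltree_edge)

lemma supp_edge_transp_ltree: "is_ltree N e \<Longrightarrow> supp (edge_transp (e i)) = e i"
  by (cases "i < N") (simp_all add: supp_edge_transp ltree_edge_card ltree_edge_beyond)

lemma card_minus_root_le_card_edges:
  fixes E :: "'a set set"
  assumes "finite E" and connected: "\<And>v. v \<in> V \<Longrightarrow> (r, v) \<in> {(a, b). {a, b} \<in> E}\<^sup>*"
  shows "card (V - {r}) \<le> card E"
proof -
  let ?adj = "{(a, b). {a, b} \<in> E}"
  define d where "d v = (LEAST n. (r, v) \<in> ?adj ^^ n)" for v
  have pred_ex: "\<exists>u. {u, v} \<in> E \<and> d u < d v" if v: "v \<in> V - {r}" for v
  proof -
    obtain n where "(r, v) \<in> ?adj ^^ n"
      using connected v rtrancl_power by blast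
    then have dv: "(r, v) \<in> ?adj ^^ d v"
      unfolding d_def by (rule LeastI)
    then obtain m where m: "d v = Suc m"
      using v by (cases "d v") auto
    with dv obtain u where u: "(r, u) \<in> ?adj ^^ m" "(u, v) \<in> ?adj"
      by auto
    from u(1) have "d u \<le> m"
      unfolding d_def by (rule Least_le)
    then show ?thesis
      using u(2) m by auto
  qed
  define pred where "pred v = (SOME u. {u, v} \<in> E \<and> d u < d v)" for v
  have pred: "{pred v, v} \<in> E" "d (pred v) < d v" if "v \<in> V - {r}" for v
    using someI_ex[OF pred_ex[OF that]] unfolding pred_def by auto
  have "inj_on (\<lambda>v. {pred v, v}) (V - {r})"
  proof
    fix v w
    assume v: "v \<in> V - {r}" and w: "w \<in> V - {r}" and eq: "{pred v, v} = {pred w, w}"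
    show "v = w"
    proof (rule ccontr)
      assume "v \<noteq> w"
      then have "v = pred w" "w = pred v"
        using eq by (auto simp: doubleton_eq_iff)
      then show False
        using pred(2)[OF v] pred(2)[OF w] by simp
    qed
  qed
  moreover have "(\<lambda>v. {pred v, v}) ` (V - {r}) \<subseteq> E"
    using pred(1) by blast
  ultimately show ?thesis
    using \<open>finite E\<close> by (rule card_inj_on_le)
qed

lemma ltree_edges_inj: "is_ltree N e \<Longrightarrow> inj_on e {..<N}"
proof -
  assume tree: "is_ltree N e"
  have "card ({0..N} - {0}) \<le> card (e ` {..<N})"
    by (rule card_minus_root_le_card_edges) (use tree in \<open>auto simp: is_ltree_iff ltree_adj_def\<close>)
  then have "card (e ` {..<N}) = card {..<N}"
    using card_image_le[of "{..<N}" e] by simp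
  then show ?thesis
    by (simp add: inj_on_iff_eq_card)
qed

lemma is_ltreeI_from_tree:
  assumes "is_ltree N e"
    and "\<And>i. i < N \<Longrightarrow> \<exists>a b. a \<le> N \<and> b \<le> N \<and> a \<noteq> b \<and> e' i = {a, b}"
    and "\<And>i. N \<le> i \<Longrightarrow> e' i = {}"
    and "ltree_adj N e \<subseteq> (ltree_adj N e')\<^sup>*"
  shows "is_ltree N e'"
proof -
  have "(ltree_adj N e)\<^sup>* \<subseteq> (ltree_adj N e')\<^sup>*"
    using assms(4) by (rule rtrancl_subset_rtrancl)
  then show ?thesis
    using assms(1-3) unfolding is_ltree_iff by blast
qed

lemma is_ltree_relabel:
  assumes tree: "is_ltree N e" and \<sigma>: "\<sigma> ` {..<N} = {..<N}"
  shows "is_ltree N (\<lambda>i. if i < N then e (\<sigma> i) else {})" (is "is_ltree N ?e'")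
proof (rule is_ltreeI_from_tree[OF tree])
  have "?e' ` {..<N} = e ` \<sigma> ` {..<N}"
    unfolding image_image by (rule image_cong) auto
  then show "ltree_adj N e \<subseteq> (ltree_adj N ?e')\<^sup>*"
    using \<sigma> by (auto simp: ltree_adj_def)
  show "\<exists>a b. a \<le> N \<and> b \<le> N \<and> a \<noteq> b \<and> ?e' i = {a, b}" if "i < N" for i
    using ltree_edge[OF tree, of "\<sigma> i"] \<sigma> that by auto
qed simp

lemma is_ltree_hurwitz:
  assumes tree: "is_ltree N e" and pq: "p < N" "q < N" "p \<noteq> q"
  shows "is_ltree N (e(p := e q, q := edge_transp (e q) ` e p))"
proof -
  define \<tau> where "\<tau> = edge_transp (e q)"
  define e' where "e' = e(p := e q, q := \<tau> ` e p)"
  obtain a b where ab: "a \<le> N" "b \<le> N" "a \<noteq> b" "e p = {a, b}"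
    using ltree_edge[OF tree pq(1)] by blast
  have \<tau>_ab: "\<tau> a \<le> N" "\<tau> b \<le> N" "\<tau> a \<noteq> \<tau> b"
    using edge_transp_in[OF ltree_edge_subset[OF tree]] ab unfolding \<tau>_def
    by auto (metis edge_transp_involution)
  have e'_pq: "e' p = e q" "e' q = {\<tau> a, \<tau> b}"
    using pq ab unfolding e'_def by auto
  have \<tau>_step: "(x, \<tau> x) \<in> (ltree_adj N e')\<^sup>*" for x
  proof (cases "\<tau> x = x")
    case False
    then have "{x, \<tau> x} = e' p"
      using edge_transp_moves[of "e q" x] e'_pq(1) unfolding \<tau>_def by simp
    then have "(x, \<tau> x) \<in> ltree_adj N e'"
      using pq(1) unfolding ltree_adj_def by auto
    then show ?thesis
      by blast
  qed simp
  have "(x, y) \<in> (ltree_adj N e')\<^sup>*" if xy: "{x, y} \<in> e ` {..<N}" for x y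
  proof -
    obtain i where i: "i < N" "e i = {x, y}"
      using xy by auto
    consider "i = p" | "i = q" | "i \<noteq> p" "i \<noteq> q"
      by blast
    then show ?thesis
    proof cases
      case 1
      have "(x, \<tau> x) \<in> (ltree_adj N e')\<^sup>*"
        by (rule \<tau>_step)
      also have "(\<tau> x, \<tau> y) \<in> ltree_adj N e'"
        using e'_pq(2) i ab pq 1 unfolding ltree_adj_def by (auto simp: doubleton_eq_iff)
      also have "(\<tau> y, y) \<in> (ltree_adj N e')\<^sup>*"
        using \<tau>_step[of "\<tau> y"] unfolding \<tau>_def by simp
      finally show ?thesis .
    next
      case 2
      then show ?thesis
        using i e'_pq(1) pq unfolding ltree_adj_def by (auto intro!: r_into_rtrancl)
    next
      case 3
      then show ?thesis
        using i unfolding ltree_adj_def e'_def by (auto intro!: r_into_rtrancl)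
    qed
  qed
  then have adj: "ltree_adj N e \<subseteq> (ltree_adj N e')\<^sup>*"
    unfolding ltree_adj_def by blast
  have "is_ltree N e'"
    by (rule is_ltreeI_from_tree[OF tree _ _ adj])
      (use ltree_edge[OF tree] ltree_edge_beyond[OF tree] pq ab \<tau>_ab in \<open>auto simp: e'_def\<close>)
  then show ?thesis
    unfolding e'_def \<tau>_def .
qed

lemma transp_valued_id_endo: "transp_valued id_endo e"
  by (auto simp: transp_valued_def id_endo_def)

lemma transp_valued_lam_aut: "transp_valued (lam_aut N) e"
  by (auto simp: transp_valued_def lam_aut_def)

lemma transp_valued_lam_inv_aut: "transp_valued (lam_inv_aut N) e"
  by (auto simp: transp_valued_def lam_inv_aut_def)

lemma transp_valued_u_aut: "transp_valued (u_aut k) e"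
  unfolding transp_valued_def u_aut_def using edge_transp_conj by (auto simp: comp_assoc)

lemma transp_valued_u_inv_aut: "transp_valued (u_inv_aut k) e"
  unfolding transp_valued_def u_inv_aut_def using edge_transp_conj by (auto simp: comp_assoc)

lemma edge_act_id_endo: "is_ltree N e \<Longrightarrow> edge_act id_endo e = e"
  by (auto simp: edge_act_def id_endo_def supp_edge_transp_ltree)

lemma edge_act_lam_aut:
  "is_ltree N e \<Longrightarrow> edge_act (lam_aut N) e = (\<lambda>i. if i < N then e (Suc i mod N) else {})"
  by (auto simp: fun_eq_iff edge_act_def lam_aut_def supp_edge_transp_ltree ltree_edge_beyond)

lemma edge_act_lam_inv_aut: "is_ltree N e \<Longrightarrow> edge_act (lam_inv_aut N) e = lam_op N e"
  by (auto simp: fun_eq_iff edge_act_def lam_inv_aut_def lam_op_def supp_edge_transp_ltree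
      ltree_edge_beyond)

lemma edge_act_u_aut:
  assumes tree: "is_ltree N e" and k: "1 \<le> k" "k < N"
  shows "edge_act (u_aut k) e = e(k - 1 := e k, k := edge_transp (e k) ` e (k - 1))"
proof
  fix i
  have "card (edge_transp (e k) ` e (k - 1)) = 2"
    using ltree_edge_card[OF tree] k by (simp add: card_image)
  then have "supp (edge_transp (edge_transp (e k) ` e (k - 1))) = edge_transp (e k) ` e (k - 1)"
    by (simp add: supp_edge_transp)
  then show "edge_act (u_aut k) e i = (e(k - 1 := e k, k := edge_transp (e k) ` e (k - 1))) i"
    using k edge_transp_conj
    by (auto simp: edge_act_def u_aut_def supp_edge_transp_ltree[OF tree] comp_assoc)
qed

lemma edge_act_u_inv_aut:
  assumes tree: "is_ltree N e" and k: "1 \<le> k" "k < N"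
  shows "edge_act (u_inv_aut k) e = e(k := e (k - 1), k - 1 := edge_transp (e (k - 1)) ` e k)"
proof
  fix i
  have "card (edge_transp (e (k - 1)) ` e k) = 2"
    using ltree_edge_card[OF tree] k by (simp add: card_image)
  then have "supp (edge_transp (edge_transp (e (k - 1)) ` e k)) = edge_transp (e (k - 1)) ` e k"
    by (simp add: supp_edge_transp)
  then show "edge_act (u_inv_aut k) e i = (e(k := e (k - 1), k - 1 := edge_transp (e (k - 1)) ` e k)) i"
    using k edge_transp_conj
    by (auto simp: edge_act_def u_inv_aut_def supp_edge_transp_ltree[OF tree] comp_assoc)
qed

lemma edge_act_u_inv_aut_eq_u_op:
  assumes tree: "is_ltree N e" and k: "1 \<le> k" "k < N"
  shows "edge_act (u_inv_aut k) e = u_op k e"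
proof -
  have "e (k - 1) \<noteq> e k"
    using k by (intro inj_on_contraD[OF ltree_edges_inj[OF tree]]) auto
  then have "edge_transp (e (k - 1)) ` e k
      = (if e (k - 1) \<inter> e k = {} then e k else (e (k - 1) - e k) \<union> (e k - e (k - 1)))"
    using ltree_edge_card[OF tree] k by (simp add: edge_transp_image_edge)
  then show ?thesis
    using k by (simp add: edge_act_u_inv_aut[OF tree k] u_op_def fun_upd_twist)
qed

lemma Suc_mod_pred_mod: "x < (N::nat) \<Longrightarrow> Suc ((x + N - 1) mod N) mod N = x"
  by (simp add: mod_Suc_eq)

lemma pred_mod_Suc_mod: "x < (N::nat) \<Longrightarrow> (Suc x mod N + N - 1) mod N = x"
proof -
  assume x: "x < N"
  have "(Suc x mod N + N - 1) mod N = (Suc x mod N + (N - 1)) mod N"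
    using x by simp
  also have "\<dots> = (Suc x + (N - 1)) mod N"
    by (rule mod_add_left_eq)
  also have "Suc x + (N - 1) = x + N"
    using x by simp
  finally show ?thesis
    using x by simp
qed

lemma comp_endo_lam_aut_lam_inv_aut: "0 < N \<Longrightarrow> comp_endo (lam_aut N) (lam_inv_aut N) = id_endo"
  by (auto simp: fun_eq_iff comp_endo_def subst_def lam_aut_def lam_inv_aut_def id_endo_def
      Suc_mod_pred_mod[simplified])

lemma comp_endo_lam_inv_aut_lam_aut: "0 < N \<Longrightarrow> comp_endo (lam_inv_aut N) (lam_aut N) = id_endo"
  by (auto simp: fun_eq_iff comp_endo_def subst_def lam_aut_def lam_inv_aut_def id_endo_def
      pred_mod_Suc_mod[simplified])

lemma comp_endo_u_aut_u_inv_aut: "1 \<le> k \<Longrightarrow> comp_endo (u_aut k) (u_inv_aut k) = id_endo"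
  by (auto simp: fun_eq_iff comp_endo_def subst_def u_aut_def u_inv_aut_def id_endo_def winv_def)

lemma comp_endo_u_inv_aut_u_aut: "1 \<le> k \<Longrightarrow> comp_endo (u_inv_aut k) (u_aut k) = id_endo"
  by (auto simp: fun_eq_iff comp_endo_def subst_def u_aut_def u_inv_aut_def id_endo_def winv_def)

lemma lam_aut_in_BC_gens: "lam_aut N \<in> BC_gens N" "lam_inv_aut N \<in> BC_gens N"
  by (simp_all add: BC_gens_def)

lemma u_aut_in_BC_gens: "k \<in> {1..N-1} \<Longrightarrow> u_aut k \<in> BC_gens N"
  by (auto simp: BC_gens_def)

lemma u_inv_aut_in_BC_gens: "k \<in> {1..N-1} \<Longrightarrow> u_inv_aut k \<in> BC_gens N"
  by (auto simp: BC_gens_def)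

lemma BC_gens_inverse:
  assumes N: "0 < N" and g: "g \<in> BC_gens N"
  shows "\<exists>g'\<in>BC_gens N. comp_endo g g' = id_endo \<and> comp_endo g' g = id_endo"
proof -
  from g consider "g = lam_aut N \<or> g = lam_inv_aut N"
    | k where "k \<in> {1..N-1}" "g = u_aut k" | k where "k \<in> {1..N-1}" "g = u_inv_aut k"
    unfolding BC_gens_def by blast
  then show ?thesis
  proof cases
    case 1
    then show ?thesis
      using lam_aut_in_BC_gens comp_endo_lam_aut_lam_inv_aut[OF N] comp_endo_lam_inv_aut_lam_aut[OF N]
      by blast
  next
    case (2 k)
    then show ?thesis
      using u_aut_in_BC_gens[OF 2(1)] u_inv_aut_in_BC_gens[OF 2(1)]
        comp_endo_u_aut_u_inv_aut comp_endo_u_inv_aut_u_aut by auto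
  next
    case (3 k)
    then show ?thesis
      using u_aut_in_BC_gens[OF 3(1)] u_inv_aut_in_BC_gens[OF 3(1)]
        comp_endo_u_aut_u_inv_aut comp_endo_u_inv_aut_u_aut by auto
  qed
qed

lemma image_Suc_mod_lessThan: "(\<lambda>i. Suc i mod N) ` {..<N} = {..<N}"
proof
  show "{..<N} \<subseteq> (\<lambda>i. Suc i mod N) ` {..<N}"
  proof
    fix x
    assume "x \<in> {..<N}"
    then have "x = Suc ((x + N - 1) mod N) mod N" "(x + N - 1) mod N \<in> {..<N}"
      using Suc_mod_pred_mod[of x N] by auto
    then show "x \<in> (\<lambda>i. Suc i mod N) ` {..<N}"
      by blast
  qed
qed auto

lemma image_pred_mod_lessThan: "(\<lambda>i. (i + N - 1) mod N) ` {..<(N::nat)} = {..<N}"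
proof
  show "{..<N} \<subseteq> (\<lambda>i. (i + N - 1) mod N) ` {..<N}"
  proof
    fix x
    assume "x \<in> {..<N}"
    then have "x = (Suc x mod N + N - 1) mod N" "Suc x mod N \<in> {..<N}"
      using pred_mod_Suc_mod[of x N] by auto
    then show "x \<in> (\<lambda>i. (i + N - 1) mod N) ` {..<N}"
      by blast
  qed
qed auto

definition tree_admissible :: "nat \<Rightarrow> endo \<Rightarrow> bool" where
  "tree_admissible N \<alpha> \<longleftrightarrow>
     (\<forall>e. transp_valued \<alpha> e) \<and> (\<forall>e. is_ltree N e \<longrightarrow> is_ltree N (edge_act \<alpha> e))"

lemma tree_admissible_id_endo: "tree_admissible N id_endo"
  by (simp add: tree_admissible_def transp_valued_id_endo edge_act_id_endo)

lemma tree_admissible_comp_endo: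
  assumes \<alpha>: "tree_admissible N \<alpha>" and \<beta>: "tree_admissible N \<beta>"
  shows "tree_admissible N (comp_endo \<alpha> \<beta>)"
  unfolding tree_admissible_def
proof (intro conjI allI impI)
  fix e
  have "transp_valued \<alpha> e" "transp_valued \<beta> (edge_act \<alpha> e)"
    using \<alpha> \<beta> unfolding tree_admissible_def by blast+
  then show "transp_valued (comp_endo \<alpha> \<beta>) e"
    by (rule transp_valued_comp_endo)
  assume "is_ltree N e"
  then show "is_ltree N (edge_act (comp_endo \<alpha> \<beta>) e)"
    using \<alpha> \<beta> \<open>transp_valued \<alpha> e\<close> unfolding tree_admissible_def by (simp add: edge_act_comp_endo)
qed

lemma tree_admissible_BC_gens:
  assumes "g \<in> BC_gens N"
  shows "tree_admissible N g"
proof -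
  have "is_ltree N (edge_act (lam_aut N) e)" if "is_ltree N e" for e
    using is_ltree_relabel[OF that image_Suc_mod_lessThan] by (simp add: edge_act_lam_aut[OF that])
  moreover have "is_ltree N (edge_act (lam_inv_aut N) e)" if "is_ltree N e" for e
    using is_ltree_relabel[OF that image_pred_mod_lessThan]
    by (simp add: edge_act_lam_inv_aut[OF that] lam_op_def)
  moreover have "is_ltree N (edge_act (u_aut k) e)" "is_ltree N (edge_act (u_inv_aut k) e)"
    if "is_ltree N e" "k \<in> {1..N-1}" for e k
    using that is_ltree_hurwitz[OF that(1), of "k - 1" k] is_ltree_hurwitz[OF that(1), of k "k - 1"]
    by (auto simp: edge_act_u_aut edge_act_u_inv_aut)
  ultimately show ?thesis
    using assms
    by (auto simp: BC_gens_def tree_admissible_def transp_valued_lam_aut transp_valued_lam_inv_aut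
        transp_valued_u_aut transp_valued_u_inv_aut)
qed

lemma tree_admissible_BC_set: "\<alpha> \<in> BC_set N \<Longrightarrow> tree_admissible N \<alpha>"
  by (induction rule: BC_set.induct)
    (auto intro: tree_admissible_id_endo tree_admissible_comp_endo tree_admissible_BC_gens)

section \<open>The action on isomorphism classes\<close>

lemma equiv_tree_iso_rel: "equiv {e. is_ltree N e} (tree_iso_rel N)"
proof (rule equivI)
  show "tree_iso_rel N \<subseteq> {e. is_ltree N e} \<times> {e. is_ltree N e}"
    unfolding tree_iso_rel_def by auto
  show "refl_on {e. is_ltree N e} (tree_iso_rel N)"
    unfolding refl_on_def tree_iso_rel_def by (auto intro!: exI[of _ id])
  show "sym (tree_iso_rel N)"
  proof (rule symI)
    fix e e'
    assume "(e, e') \<in> tree_iso_rel N"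
    then obtain \<pi> where trees: "is_ltree N e" "is_ltree N e'" and \<pi>: "bij_betw \<pi> {0..N} {0..N}"
      and e': "\<forall>i<N. e' i = \<pi> ` e i"
      unfolding tree_iso_rel_def by blast
    have "\<forall>i<N. e i = inv_into {0..N} \<pi> ` e' i"
      using e' ltree_edge_subset[OF trees(1)] \<pi> by (simp add: bij_betw_def inv_into_image_cancel)
    then show "(e', e) \<in> tree_iso_rel N"
      unfolding tree_iso_rel_def using trees bij_betw_inv_into[OF \<pi>] by blast
  qed
  show "trans (tree_iso_rel N)"
  proof (rule transI)
    fix e1 e2 e3
    assume "(e1, e2) \<in> tree_iso_rel N" "(e2, e3) \<in> tree_iso_rel N"
    then obtain \<pi>1 \<pi>2 where trees: "is_ltree N e1" "is_ltree N e3"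
      and \<pi>: "bij_betw \<pi>1 {0..N} {0..N}" "bij_betw \<pi>2 {0..N} {0..N}"
      and e: "\<forall>i<N. e2 i = \<pi>1 ` e1 i" "\<forall>i<N. e3 i = \<pi>2 ` e2 i"
      unfolding tree_iso_rel_def by blast
    then have "\<forall>i<N. e3 i = (\<pi>2 \<circ> \<pi>1) ` e1 i"
      by (simp add: image_comp)
    then show "(e1, e3) \<in> tree_iso_rel N"
      unfolding tree_iso_rel_def using trees bij_betw_trans[OF \<pi>] by blast
  qed
qed

lemma edge_act_tree_iso_rel:
  assumes \<alpha>: "tree_admissible N \<alpha>" and iso: "(e, e') \<in> tree_iso_rel N"
  shows "(edge_act \<alpha> e, edge_act \<alpha> e') \<in> tree_iso_rel N"
proof -
  obtain \<pi> where trees: "is_ltree N e" "is_ltree N e'" and \<pi>: "bij_betw \<pi> {0..N} {0..N}"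
    and e': "\<forall>i<N. e' i = \<pi> ` e i"
    using iso unfolding tree_iso_rel_def by blast
  define p where "p x = (if x \<in> {0..N} then \<pi> x else x)" for x
  have "bij_betw p {0..N} {0..N} \<longleftrightarrow> bij_betw \<pi> {0..N} {0..N}"
    by (rule bij_betw_cong) (simp add: p_def)
  moreover have "{x. p x \<noteq> x} \<subseteq> {0..N}"
    by (auto simp: p_def)
  ultimately have "p permutes {0..N}"
    using \<pi> by (simp add: permutes_altdef)
  then have p: "bij p"
    by (rule permutes_bij)
  have p_image: "p ` S = \<pi> ` S" if "S \<subseteq> {0..N}" for S
    by (rule image_cong[OF refl]) (use that in \<open>auto simp: p_def\<close>)
  have "e' i = p ` e i" for i
  proof (cases "i < N")
    case True
    then show ?thesis
      using e' p_image[OF ltree_edge_subset[OF trees(1)]] by simp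
  next
    case False
    then show ?thesis
      using ltree_edge_beyond[OF trees(1)] ltree_edge_beyond[OF trees(2)] by simp
  qed
  then have "e' = (\<lambda>i. p ` e i)"
    by (rule ext)
  then have "edge_act \<alpha> e' = (\<lambda>i. p ` edge_act \<alpha> e i)"
    using edge_act_image[OF p] by simp
  moreover have acted: "is_ltree N (edge_act \<alpha> e)" "is_ltree N (edge_act \<alpha> e')"
    using \<alpha> trees unfolding tree_admissible_def by auto
  ultimately have "\<forall>i<N. edge_act \<alpha> e' i = \<pi> ` edge_act \<alpha> e i"
    using p_image ltree_edge_subset[OF acted(1)] by simp
  then show ?thesis
    unfolding tree_iso_rel_def using acted \<pi> by blast
qed

lemma tree_class_in_tree_classes: "is_ltree N e \<Longrightarrow> tree_class N e \<in> tree_classes N"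
  unfolding tree_class_def tree_classes_def by (rule quotientI) simp

lemma tree_class_eq_iff:
  "is_ltree N e \<Longrightarrow> is_ltree N e' \<Longrightarrow> tree_class N e = tree_class N e' \<longleftrightarrow> (e, e') \<in> tree_iso_rel N"
  unfolding tree_class_def by (simp add: equiv_class_eq_iff[OF equiv_tree_iso_rel])

lemma tree_classesE:
  assumes "C \<in> tree_classes N"
  obtains e where "is_ltree N e" "C = tree_class N e"
  using assms unfolding tree_classes_def tree_class_def by (auto elim: quotientE)

lemma tree_class_self: "is_ltree N e \<Longrightarrow> e \<in> tree_class N e"
  unfolding tree_class_def using equiv_tree_iso_rel[of N] by (simp add: equiv_def refl_on_def)

definition class_act :: "nat \<Rightarrow> endo \<Rightarrow> ltree set \<Rightarrow> ltree set" where
  "class_act N \<alpha> C = tree_class N (edge_act \<alpha> (SOME e. e \<in> C))"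

lemma class_act_tree_class:
  assumes \<alpha>: "tree_admissible N \<alpha>" and tree: "is_ltree N e"
  shows "class_act N \<alpha> (tree_class N e) = tree_class N (edge_act \<alpha> e)"
proof -
  define e0 where "e0 = (SOME e0. e0 \<in> tree_class N e)"
  have "e0 \<in> tree_class N e"
    unfolding e0_def some_in_eq using tree_class_self[OF tree] by auto
  then have "(e, e0) \<in> tree_iso_rel N"
    by (simp add: tree_class_def)
  moreover from this have "(edge_act \<alpha> e, edge_act \<alpha> e0) \<in> tree_iso_rel N"
    by (rule edge_act_tree_iso_rel[OF \<alpha>])
  ultimately show ?thesis
    unfolding class_act_def e0_def[symmetric]
    by (metis (lifting) tree_class_eq_iff tree_iso_rel_def case_prodD mem_Collect_eq)
qed

lemma class_act_in_tree_classes: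
  "tree_admissible N \<alpha> \<Longrightarrow> C \<in> tree_classes N \<Longrightarrow> class_act N \<alpha> C \<in> tree_classes N"
  by (erule tree_classesE)
    (auto simp: class_act_tree_class tree_class_in_tree_classes tree_admissible_def)

lemma class_act_comp_endo:
  assumes "tree_admissible N \<alpha>" "tree_admissible N \<beta>" "C \<in> tree_classes N"
  shows "class_act N (comp_endo \<alpha> \<beta>) C = class_act N \<beta> (class_act N \<alpha> C)"
  using assms(3)
proof (rule tree_classesE)
  fix e
  assume tree: "is_ltree N e" and C: "C = tree_class N e"
  have "is_ltree N (edge_act \<alpha> e)" "transp_valued \<alpha> e"
    using assms(1) tree unfolding tree_admissible_def by auto
  then show ?thesis
    using assms tree C
    by (simp add: class_act_tree_class tree_admissible_comp_endo edge_act_comp_endo)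
qed

lemma class_act_id_endo: "C \<in> tree_classes N \<Longrightarrow> class_act N id_endo C = C"
  by (erule tree_classesE) (simp add: class_act_tree_class tree_admissible_id_endo edge_act_id_endo)

lemma bij_betw_class_act_BC_gens:
  assumes "0 < N" and g: "g \<in> BC_gens N"
  shows "bij_betw (class_act N g) (tree_classes N) (tree_classes N)"
proof -
  obtain g' where g': "g' \<in> BC_gens N" "comp_endo g g' = id_endo" "comp_endo g' g = id_endo"
    using BC_gens_inverse[OF assms] by blast
  have adm: "tree_admissible N g" "tree_admissible N g'"
    using tree_admissible_BC_gens g g'(1) by auto
  show ?thesis
  proof (rule bij_betw_byWitness[where f' = "class_act N g'"])
    show "\<forall>C\<in>tree_classes N. class_act N g' (class_act N g C) = C"
      using class_act_comp_endo[OF adm] g'(2) class_act_id_endo by metis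
    show "\<forall>C\<in>tree_classes N. class_act N g (class_act N g' C) = C"
      using class_act_comp_endo[OF adm(2,1)] g'(3) class_act_id_endo by metis
  qed (use class_act_in_tree_classes adm in blast)+
qed

lemma bij_betw_class_act:
  assumes "0 < N" and "\<alpha> \<in> BC_set N"
  shows "bij_betw (class_act N \<alpha>) (tree_classes N) (tree_classes N)"
  using assms(2)
proof (induction rule: BC_set.induct)
  case BC_id
  have "bij_betw (class_act N id_endo) (tree_classes N) (tree_classes N)
      \<longleftrightarrow> bij_betw id (tree_classes N) (tree_classes N)"
    by (rule bij_betw_cong) (simp add: class_act_id_endo)
  then show ?case
    by simp
next
  case (BC_step g \<alpha>)
  have "bij_betw (class_act N (comp_endo g \<alpha>)) (tree_classes N) (tree_classes N)
      \<longleftrightarrow> bij_betw (class_act N \<alpha> \<circ> class_act N g) (tree_classes N) (tree_classes N)"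
    by (rule bij_betw_cong)
      (simp add: class_act_comp_endo tree_admissible_BC_gens tree_admissible_BC_set BC_step)
  moreover have "bij_betw (class_act N \<alpha> \<circ> class_act N g) (tree_classes N) (tree_classes N)"
    using bij_betw_class_act_BC_gens[OF assms(1) BC_step(1)] BC_step.IH by (rule bij_betw_trans)
  ultimately show ?case
    by simp
qed

definition class_perm :: "nat \<Rightarrow> endo \<Rightarrow> ltree set \<Rightarrow> ltree set" where
  "class_perm N \<alpha> = restrict (class_act N \<alpha>) (tree_classes N)"

lemma class_perm_Bij:
  "bij_betw (class_act N \<alpha>) (tree_classes N) (tree_classes N) \<Longrightarrow> class_perm N \<alpha> \<in> Bij (tree_classes N)"
  by (simp add: Bij_def class_perm_def)

lemma class_perm_comp_endo:
  assumes "\<alpha> \<in> BC_set N" "\<beta> \<in> BC_set N"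
  shows "class_perm N (comp_endo \<alpha> \<beta>) = compose (tree_classes N) (class_perm N \<beta>) (class_perm N \<alpha>)"
  using assms
  by (auto simp: fun_eq_iff class_perm_def compose_def class_act_comp_endo class_act_in_tree_classes
      tree_admissible_BC_set)

lemma inv_BijGroup_apply: "f \<in> Bij S \<Longrightarrow> y \<in> S \<Longrightarrow> f y = x \<Longrightarrow> (inv\<^bsub>BijGroup S\<^esub> f) x = y"
  by (auto simp: inv_BijGroup Bij_def bij_betw_def inv_into_f_eq)

lemma inv_antihom_into_BijGroup:
  assumes "\<And>x. x \<in> carrier G \<Longrightarrow> f x \<in> Bij S"
    and "\<And>x y. x \<in> carrier G \<Longrightarrow> y \<in> carrier G \<Longrightarrow> f (x \<otimes>\<^bsub>G\<^esub> y) = compose S (f y) (f x)"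
  shows "(\<lambda>x. inv\<^bsub>BijGroup S\<^esub> f x) \<in> hom G (BijGroup S)"
proof (rule homI)
  interpret Sym: group "BijGroup S"
    by (rule group_BijGroup)
  show "inv\<^bsub>BijGroup S\<^esub> f x \<in> carrier (BijGroup S)" if "x \<in> carrier G" for x
    using assms(1)[OF that] by (intro Sym.inv_closed) (simp add: BijGroup_def)
  show "inv\<^bsub>BijGroup S\<^esub> f (x \<otimes>\<^bsub>G\<^esub> y)
      = inv\<^bsub>BijGroup S\<^esub> f x \<otimes>\<^bsub>BijGroup S\<^esub> inv\<^bsub>BijGroup S\<^esub> f y"
    if "x \<in> carrier G" "y \<in> carrier G" for x y
    using assms that Sym.inv_mult_group[of "f y" "f x"] by (simp add: BijGroup_def)
qed

lemma inv_class_perm_BC_gens: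
  assumes "0 < N" and g: "g \<in> BC_gens N" and g': "g' \<in> BC_gens N" "comp_endo g' g = id_endo"
    and tree: "is_ltree N e"
  shows "(inv\<^bsub>BijGroup (tree_classes N)\<^esub> class_perm N g) (tree_class N e)
    = tree_class N (edge_act g' e)"
proof (rule inv_BijGroup_apply)
  have adm: "tree_admissible N g'" "tree_admissible N g"
    using tree_admissible_BC_gens g g' by auto
  then have tree': "is_ltree N (edge_act g' e)"
    using tree unfolding tree_admissible_def by blast
  show "class_perm N g \<in> Bij (tree_classes N)"
    using bij_betw_class_act_BC_gens[OF assms(1) g] by (rule class_perm_Bij)
  show "tree_class N (edge_act g' e) \<in> tree_classes N"
    using tree' by (rule tree_class_in_tree_classes)
  have "edge_act g (edge_act g' e) = e"
    using adm tree g'(2) edge_act_comp_endo[of g' e g] edge_act_id_endo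
    unfolding tree_admissible_def by metis
  then show "class_perm N g (tree_class N (edge_act g' e)) = tree_class N e"
    using tree' adm(2) by (simp add: class_perm_def tree_class_in_tree_classes class_act_tree_class)
qed

theorem mainTheorem10:
  fixes N :: nat
  assumes "N \<ge> 2"
  shows "\<exists>\<rho>. \<rho> \<in> hom (BC N) (BijGroup (tree_classes N)) \<and>
    (\<forall>e. is_ltree N e \<longrightarrow>
       \<rho> (lam_aut N) (tree_class N e) = tree_class N (lam_op N e) \<and>
       (\<forall>k\<in>{1..N-1}. \<rho> (u_aut k) (tree_class N e) = tree_class N (u_op k e)))"
proof -
  have N: "0 < N"
    using assms by simp
  let ?\<rho> = "\<lambda>\<alpha>. inv\<^bsub>BijGroup (tree_classes N)\<^esub> class_perm N \<alpha>"
  have "?\<rho> \<in> hom (BC N) (BijGroup (tree_classes N))"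
    by (rule inv_antihom_into_BijGroup)
      (simp_all add: BC_def class_perm_Bij bij_betw_class_act[OF N] class_perm_comp_endo)
  moreover have "?\<rho> (lam_aut N) (tree_class N e) = tree_class N (lam_op N e)" if "is_ltree N e" for e
    using inv_class_perm_BC_gens[OF N lam_aut_in_BC_gens comp_endo_lam_inv_aut_lam_aut[OF N] that]
    by (simp add: edge_act_lam_inv_aut[OF that])
  moreover have "?\<rho> (u_aut k) (tree_class N e) = tree_class N (u_op k e)"
    if "is_ltree N e" "k \<in> {1..N-1}" for e k
  proof -
    have k: "1 \<le> k" "k < N"
      using that(2) N by auto
    show ?thesis
      using inv_class_perm_BC_gens[OF N _ _ comp_endo_u_inv_aut_u_aut[OF k(1)] that(1)]
        u_aut_in_BC_gens[OF that(2)] u_inv_aut_in_BC_gens[OF that(2)]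
        edge_act_u_inv_aut_eq_u_op[OF that(1) k] by simp
  qed
  ultimately show ?thesis
    by blast
qed

end
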